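(* Let $\Phi$ be a (finite crystallographic, possibly non-reduced) root system and $V\le\mathbb R\Phi$ a subspace. 1. If $V$ is $1$-small and $\alpha\in\Phi\cap V$, then there is an irreducible saturated root subsystem $\alpha\in\Psi\subseteq\Phi$ of rank $2$ with $\mathbb R\Psi\cap V=\mathbb R\alpha$. 2. If $V$ is $2$-small and $\alpha,\beta\in\Phi$ are linearly independent with $(\mathbb R\alpha+\mathbb R\beta)\cap V$ one-dimensional, then there is an irreducible saturated root subsystem $\alpha\in\Psi\subseteq\Phi$ of rank $2$ with $\beta\notin\Psi$ and $(\mathbb R\Psi+\mathbb R\beta)\cap V$ one-dimensional. 3. If $V$ is $2$-small and $\alpha,\beta\in\Phi\cap V$ are linearly independent, then there is an irreducible saturated root subsystem $\alpha\in\Psi\subseteq\Phi$ of rank $2$ with $\beta\notin\Psi$ and $\mathbb R\Psi\cap V=\mathbb R\alpha$. 4. If $V$ is $2$-small, $\alpha\in\Phi\cap V$ and $\beta,\gamma\in\Phi\setminus V$ are linearly independent, and $(\mathbb R\alpha+\mathbb R\beta+\mathbb R\gamma)\cap V$ is two-dimensional, then there is an irreducible saturated root subsystem $\alpha\in\Psi\subseteq\Phi$ of rank $2$ with $\beta,\gamma\notin\Psi$ such that both $(\mathbb R\Psi+\mathbb R\beta)\cap V$ and $(\mathbb R\Psi+\mathbb R\gamma)\cap V$ are one-dimensional. 5. If $V$ is $2$-small, the roots $\alpha\in\Phi\cap V$ and $\beta,\gamma\in\Phi\setminus V$ are linearly independent, and $(\mathbb R\alpha+\mathbb R\beta+\mathbb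 R\gamma)\cap V$ is two-dimensional, then there is an irreducible saturated root subsystem $\gamma\in\Psi\subseteq\Phi$ of rank $2$ such that $\mathbb R\alpha+\mathbb R\beta+\mathbb R\Psi$ is four-dimensional and $(\mathbb R\Psi+\mathbb R\alpha+\mathbb R\beta)\cap V$ is two-dimensional.
   Context: A subspace $V\le\mathbb R\Phi$ is $k$-small if for every irreducible component $\Psi$ of $\Phi$ the codimension of $V\cap\mathbb R\Psi$ in $\mathbb R\Psi$ is at least $k$. A saturated root subsystem of $\Phi$ is a subset of the form $\Phi\cap W$ for a linear subspace $W$. *)

theory Defs
  imports "HOL-Analysis.Analysis"
begin

definition root_system :: "'a::euclidean_space set \<Rightarrow> bool" where
  "root_system \<Phi> \<longleftrightarrow> finite \<Phi> \<and> 0 \<notin> \<Phi> \<and>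
     (\<forall>\<alpha>\<in>\<Phi>. \<forall>\<beta>\<in>\<Phi>. \<beta> - (2 * (\<beta> \<bullet> \<alpha>) / (\<alpha> \<bullet> \<alpha>)) *\<^sub>R \<alpha> \<in> \<Phi>) \<and>
     (\<forall>\<alpha>\<in>\<Phi>. \<forall>\<beta>\<in>\<Phi>. 2 * (\<beta> \<bullet> \<alpha>) / (\<alpha> \<bullet> \<alpha>) \<in> \<int>)"

definition irreducible_roots :: "'a::euclidean_space set \<Rightarrow> bool" where
  "irreducible_roots \<Psi> \<longleftrightarrow> \<Psi> \<noteq> {} \<and>
     (\<forall>A B. A \<union> B = \<Psi> \<longrightarrow> A \<inter> B = {} \<longrightarrow> (\<forall>a\<in>A. \<forall>b\<in>B. a \<bullet> b = 0) \<longrightarrow> A = {} \<or> B = {})"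

definition irreducible_component :: "'a::euclidean_space set \<Rightarrow> 'a set \<Rightarrow> bool" where
  "irreducible_component \<Phi> \<Psi> \<longleftrightarrow> \<Psi> \<subseteq> \<Phi> \<and> irreducible_roots \<Psi> \<and>
     (\<forall>a\<in>\<Psi>. \<forall>b\<in>\<Phi> - \<Psi>. a \<bullet> b = 0)"

definition k_small :: "nat \<Rightarrow> 'a::euclidean_space set \<Rightarrow> 'a set \<Rightarrow> bool" where
  "k_small k \<Phi> V \<longleftrightarrow> (\<forall>\<Psi>. irreducible_component \<Phi> \<Psi> \<longrightarrow>
      dim (V \<inter> span \<Psi>) + k \<le> dim (span \<Psi>))"

definition saturated_subsystem :: "'a::euclidean_space set \<Rightarrow> 'a set \<Rightarrow> bool" where
  "saturated_subsystem \<Phi> \<Psi> \<longleftrightarrow> (\<exists>W. subspace W \<and> \<Psi> = \<Phi> \<inter> W)"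

definition rank :: "'a::euclidean_space set \<Rightarrow> nat" where
  "rank \<Psi> = dim (span \<Psi>)"

definition good_sub :: "'a::euclidean_space set \<Rightarrow> 'a set \<Rightarrow> bool" where
  "good_sub \<Phi> \<Psi> \<longleftrightarrow> saturated_subsystem \<Phi> \<Psi> \<and> irreducible_roots \<Psi> \<and> rank \<Psi> = 2"

end

theory Submission
  imports Defs
begin

text \<open>The roots not orthogonal to a root \<open>\<alpha>\<close> span the irreducible component of \<open>\<alpha>\<close>.
  Hence, if \<open>V\<close> is \<open>k\<close>-small and \<open>W \<supseteq> V\<close> is a subspace with \<open>dim W < dim V + k\<close>, some root
  \<open>\<delta>\<close> with \<open>(\<alpha>, \<delta>) \<noteq> 0\<close> lies outside \<open>W\<close>, for otherwise \<open>V\<close> would have codimension less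
  than \<open>k\<close> in that component. For such \<open>\<delta>\<close> the saturated subsystem \<open>\<Phi> \<inter> span {\<alpha>, \<delta>}\<close> is
  irreducible of rank 2, and adjoining \<open>\<delta>\<close> to roots spanning a subspace of \<open>W\<close> does not change
  the intersection with \<open>V\<close>. Each statement follows by taking for \<open>W\<close> the sum of \<open>V\<close> and the
  span of the given roots.\<close>

lemma dim_span_Un_subspace:
  fixes V S :: "'a::euclidean_space set"
  assumes "subspace V"
  shows "dim (span (V \<union> S)) + dim (V \<inter> span S) = dim V + dim S"
proof -
  have "span (V \<union> S) = {x + y |x y. x \<in> V \<and> y \<in> span S}"
    using assms by (simp add: span_Un span_eq_iff[THEN iffD2])
  then show ?thesis
    using dim_sums_Int[OF assms subspace_span[of S]] by simp
qed

lemma dim_Int_codim_le: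
  fixes V W S :: "'a::euclidean_space set"
  assumes "subspace V" "subspace W" "V \<subseteq> W" "S \<subseteq> W"
  shows "dim S + dim V \<le> dim W + dim (V \<inter> span S)"
proof -
  have "span (V \<union> S) \<subseteq> W"
    using assms by (simp add: span_minimal)
  then have "dim (span (V \<union> S)) \<le> dim W"
    by (rule dim_subset)
  then show ?thesis
    using dim_span_Un_subspace[OF assms(1), of S] by linarith
qed

lemma span_insert_Int_subspace:
  fixes W S :: "'a::euclidean_space set"
  assumes "subspace W" "span S \<subseteq> W" "d \<notin> W"
  shows "span (insert d S) \<inter> W = span S"
proof (intro equalityI subsetI)
  fix x assume x: "x \<in> span (insert d S) \<inter> W"
  then obtain k where k: "x - k *\<^sub>R d \<in> span S"
    by (auto simp: span_insert)
  have "k *\<^sub>R d \<in> W"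
    using subspace_diff[OF assms(1), of x "x - k *\<^sub>R d"] x k assms(2) by auto
  then have "k = 0"
    using assms(3) subspace_scale[OF assms(1), of "k *\<^sub>R d" "inverse k"] by (cases "k = 0") auto
  then show "x \<in> span S"
    using k by simp
next
  fix x assume "x \<in> span S"
  then show "x \<in> span (insert d S) \<inter> W"
    using assms(2) span_mono[of S "insert d S"] by auto
qed

lemma span_insert_Int_eq:
  fixes V W S :: "'a::euclidean_space set"
  assumes "subspace W" "V \<subseteq> W" "span S \<subseteq> W" "d \<notin> W"
  shows "span (insert d S) \<inter> V = span S \<inter> V"
  using span_insert_Int_subspace[OF assms(1,3,4)] assms(2) by blast

lemma subset_span_Un:
  fixes V S :: "'a::euclidean_space set"
  shows "V \<subseteq> span (V \<union> S)" and "span S \<subseteq> span (V \<union> S)"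
  using span_superset[of "V \<union> S"] span_mono[of S "V \<union> S"] by auto

lemma independent_pair_not_in_span:
  assumes "independent {\<alpha>, \<beta>}" "\<alpha> \<noteq> \<beta>"
  shows "\<beta> \<notin> span {\<alpha>}"
proof -
  have "independent (insert \<beta> {\<alpha>})"
    using assms(1) by (simp add: insert_commute)
  then show ?thesis
    using assms(2) by (simp add: independent_insert)
qed

lemma root_system_nonzero: "root_system \<Phi> \<Longrightarrow> 0 \<notin> \<Phi>"
  by (simp add: root_system_def)

lemma root_system_reflection:
  "root_system \<Phi> \<Longrightarrow> \<alpha> \<in> \<Phi> \<Longrightarrow> \<beta> \<in> \<Phi> \<Longrightarrow> \<beta> - (2 * (\<beta> \<bullet> \<alpha>) / (\<alpha> \<bullet> \<alpha>)) *\<^sub>R \<alpha> \<in> \<Phi>"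
  by (simp add: root_system_def)

lemma irreducible_rootsI:
  assumes "\<alpha> \<in> \<Psi>"
    and "\<And>A B. A \<union> B = \<Psi> \<Longrightarrow> A \<inter> B = {} \<Longrightarrow> \<forall>a\<in>A. \<forall>b\<in>B. a \<bullet> b = 0 \<Longrightarrow> \<alpha> \<in> A \<Longrightarrow> B = {}"
  shows "irreducible_roots \<Psi>"
  unfolding irreducible_roots_def
proof (intro conjI allI impI)
  show "\<Psi> \<noteq> {}"
    using assms(1) by auto
next
  fix A B :: "'a set"
  assume AB: "A \<union> B = \<Psi>" "A \<inter> B = {}" "\<forall>a\<in>A. \<forall>b\<in>B. a \<bullet> b = 0"
  then have BA: "B \<union> A = \<Psi>" "B \<inter> A = {}" "\<forall>b\<in>B. \<forall>a\<in>A. b \<bullet> a = 0"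
    by (auto, metis inner_commute)
  show "A = {} \<or> B = {}"
    using assms(2)[OF AB] assms(2)[OF BA] AB(1) assms(1) by blast
qed

definition linked_roots :: "'a::euclidean_space set \<Rightarrow> 'a \<Rightarrow> 'a set" where
  "linked_roots \<Phi> \<alpha> = {\<gamma>\<in>\<Phi>. (\<alpha>, \<gamma>) \<in> {(x, y). x \<in> \<Phi> \<and> y \<in> \<Phi> \<and> x \<bullet> y \<noteq> 0}\<^sup>*}"

lemma linked_roots_subset: "linked_roots \<Phi> \<alpha> \<subseteq> \<Phi>"
  by (auto simp: linked_roots_def)

lemma self_in_linked_roots: "\<alpha> \<in> \<Phi> \<Longrightarrow> \<alpha> \<in> linked_roots \<Phi> \<alpha>"
  by (simp add: linked_roots_def)

lemma linked_roots_closed: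
  assumes "\<beta> \<in> linked_roots \<Phi> \<alpha>" "\<gamma> \<in> \<Phi>" "\<beta> \<bullet> \<gamma> \<noteq> 0"
  shows "\<gamma> \<in> linked_roots \<Phi> \<alpha>"
  using assms by (auto simp: linked_roots_def intro: rtrancl_into_rtrancl)

lemma irreducible_component_linked_roots:
  assumes "\<alpha> \<in> \<Phi>"
  shows "irreducible_component \<Phi> (linked_roots \<Phi> \<alpha>)"
proof -
  let ?C = "linked_roots \<Phi> \<alpha>"
  have "irreducible_roots ?C"
  proof (rule irreducible_rootsI[OF self_in_linked_roots[OF assms]])
    fix A B
    assume AB: "A \<union> B = ?C" "A \<inter> B = {}" "\<forall>a\<in>A. \<forall>b\<in>B. a \<bullet> b = 0" and "\<alpha> \<in> A"
    have "\<gamma> \<in> A" if "(\<alpha>, \<gamma>) \<in> {(x, y). x \<in> \<Phi> \<and> y \<in> \<Phi> \<and> x \<bullet> y \<noteq> 0}\<^sup>*" for \<gamma>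
      using that
    proof (induction rule: rtrancl_induct)
      case base
      show ?case using \<open>\<alpha> \<in> A\<close> .
    next
      case (step \<beta> \<gamma>)
      then have "\<gamma> \<in> ?C"
        using AB(1) linked_roots_closed[of \<beta> \<Phi> \<alpha> \<gamma>] by auto
      moreover have "\<gamma> \<notin> B"
        using AB(3) step by auto
      ultimately show ?case
        using AB(1) by auto
    qed
    then show "B = {}"
      using AB(1,2) by (auto simp: linked_roots_def)
  qed
  then show ?thesis
    using linked_roots_closed[of _ \<Phi> \<alpha>]
    by (auto simp: irreducible_component_def linked_roots_subset inner_commute)
qed

text \<open>If a root \<open>\<beta>\<close> orthogonal to \<open>\<alpha>\<close> were not orthogonal to a root \<open>\<delta>\<close> with
  \<open>(\<delta>, \<alpha>) \<noteq> 0\<close>, its reflection \<open>\<beta> - c\<delta>\<close> in \<open>\<delta>\<close> would again be a root not orthogonal to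
  \<open>\<alpha>\<close>, putting \<open>\<beta>\<close> in the span of such roots. So the roots of the component outside that
  span are orthogonal to those inside, and irreducibility leaves none of them.\<close>
lemma span_linked_roots:
  fixes \<Phi> :: "'a::euclidean_space set"
  assumes \<Phi>: "root_system \<Phi>" and \<alpha>: "\<alpha> \<in> \<Phi>"
  shows "span (linked_roots \<Phi> \<alpha>) = span {\<delta>\<in>\<Phi>. \<delta> \<bullet> \<alpha> \<noteq> 0}"
proof -
  let ?C = "linked_roots \<Phi> \<alpha>" and ?N = "{\<delta>\<in>\<Phi>. \<delta> \<bullet> \<alpha> \<noteq> 0}"
  have NC: "?N \<subseteq> ?C"
    using linked_roots_closed[OF self_in_linked_roots[OF \<alpha>]] by (auto simp: inner_commute)
  have orth: "\<beta> \<bullet> x = 0" if \<beta>: "\<beta> \<in> ?C - span ?N" and x: "x \<in> span ?N" for \<beta> x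
  proof -
    have \<beta>\<Phi>: "\<beta> \<in> \<Phi>"
      using \<beta> linked_roots_subset by auto
    then have \<beta>\<alpha>: "\<beta> \<bullet> \<alpha> = 0"
      using \<beta> span_base[of \<beta> ?N] by auto
    have "\<beta> \<bullet> \<delta> = 0" if \<delta>: "\<delta> \<in> ?N" for \<delta>
    proof (rule ccontr)
      assume \<beta>\<delta>: "\<beta> \<bullet> \<delta> \<noteq> 0"
      define c where "c = 2 * (\<beta> \<bullet> \<delta>) / (\<delta> \<bullet> \<delta>)"
      have "\<delta> \<noteq> 0"
        using \<delta> root_system_nonzero[OF \<Phi>] by auto
      then have "c \<noteq> 0"
        using \<beta>\<delta> by (simp add: c_def)
      moreover have "\<beta> - c *\<^sub>R \<delta> \<in> \<Phi>"
        unfolding c_def using root_system_reflection[OF \<Phi>] \<delta> \<beta>\<Phi> by auto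
      ultimately have "\<beta> - c *\<^sub>R \<delta> \<in> ?N"
        using \<delta> \<beta>\<alpha> by (simp add: inner_diff_left)
      then have "(\<beta> - c *\<^sub>R \<delta>) + c *\<^sub>R \<delta> \<in> span ?N"
        using \<delta> by (intro span_add span_scale) (auto intro: span_base)
      then show False
        using \<beta> by simp
    qed
    then show ?thesis
      using orthogonal_to_span[OF x, of \<beta>] by (simp add: orthogonal_def)
  qed
  have "irreducible_roots ?C"
    using irreducible_component_linked_roots[OF \<alpha>] by (simp add: irreducible_component_def)
  moreover have "\<alpha> \<in> ?C \<inter> span ?N"
    using self_in_linked_roots[OF \<alpha>] \<alpha> root_system_nonzero[OF \<Phi>] by (auto intro: span_base)
  moreover have "(?C \<inter> span ?N) \<union> (?C - span ?N) = ?C" "(?C \<inter> span ?N) \<inter> (?C - span ?N) = {}"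
    by auto
  moreover have "\<forall>x\<in>?C \<inter> span ?N. \<forall>\<beta>\<in>?C - span ?N. x \<bullet> \<beta> = 0"
  proof (intro ballI)
    fix x \<beta> assume "x \<in> ?C \<inter> span ?N" "\<beta> \<in> ?C - span ?N"
    then have "\<beta> \<bullet> x = 0"
      by (intro orth) auto
    then show "x \<bullet> \<beta> = 0"
      by (simp add: inner_commute)
  qed
  ultimately have "?C - span ?N = {}"
    unfolding irreducible_roots_def by blast
  then have "span ?C \<subseteq> span ?N"
    by (simp add: span_minimal)
  then show ?thesis
    using span_mono[OF NC] by auto
qed

lemma k_small_nonorthogonal_roots:
  assumes "root_system \<Phi>" "k_small k \<Phi> V" "\<alpha> \<in> \<Phi>"
  shows "dim (V \<inter> span {\<delta>\<in>\<Phi>. \<delta> \<bullet> \<alpha> \<noteq> 0}) + k \<le> dim {\<delta>\<in>\<Phi>. \<delta> \<bullet> \<alpha> \<noteq> 0}"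
proof -
  have "dim (V \<inter> span (linked_roots \<Phi> \<alpha>)) + k \<le> dim (span (linked_roots \<Phi> \<alpha>))"
    using assms(2) irreducible_component_linked_roots[OF assms(3)] by (simp add: k_small_def)
  then show ?thesis
    by (simp add: span_linked_roots[OF assms(1,3)])
qed

lemma span_Un_Int_span:
  assumes "S \<subseteq> \<Phi>"
  shows "span (T \<union> (\<Phi> \<inter> span S)) = span (T \<union> S)"
proof -
  have "span (\<Phi> \<inter> span S) = span S"
  proof (rule subset_antisym)
    show "span (\<Phi> \<inter> span S) \<subseteq> span S"
      by (simp add: span_minimal)
    show "span S \<subseteq> span (\<Phi> \<inter> span S)"
      using assms by (intro span_mono) (auto intro: span_base)
  qed
  then show ?thesis
    by (simp add: span_Un)
qed

lemma good_sub_Int_span_pair: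
  fixes \<Phi> :: "'a::euclidean_space set"
  assumes \<Phi>0: "0 \<notin> \<Phi>" and \<alpha>: "\<alpha> \<in> \<Phi>" and \<delta>: "\<delta> \<in> \<Phi>" "\<alpha> \<bullet> \<delta> \<noteq> 0" "\<delta> \<notin> span {\<alpha>}"
  shows "good_sub \<Phi> (\<Phi> \<inter> span {\<alpha>, \<delta>})"
proof -
  let ?\<Psi> = "\<Phi> \<inter> span {\<alpha>, \<delta>}"
  have \<alpha>\<Psi>: "\<alpha> \<in> ?\<Psi>" and \<delta>\<Psi>: "\<delta> \<in> ?\<Psi>"
    using \<alpha> \<delta> by (auto intro: span_base)
  have "saturated_subsystem \<Phi> ?\<Psi>"
    unfolding saturated_subsystem_def by (intro exI[of _ "span {\<alpha>, \<delta>}"]) simp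
  moreover have "rank ?\<Psi> = 2"
  proof -
    have "dim (insert \<delta> {\<alpha>}) = 2"
      using \<delta>(3) \<alpha> \<Phi>0 by (auto simp: dim_insert)
    then show ?thesis
      using span_Un_Int_span[of "{\<alpha>, \<delta>}" \<Phi> "{}"] \<alpha> \<delta>
      by (simp add: rank_def insert_commute)
  qed
  moreover have "irreducible_roots ?\<Psi>"
  proof (rule irreducible_rootsI[OF \<alpha>\<Psi>])
    fix A B
    assume AB: "A \<union> B = ?\<Psi>" "A \<inter> B = {}" "\<forall>a\<in>A. \<forall>b\<in>B. a \<bullet> b = 0" and "\<alpha> \<in> A"
    then have "\<delta> \<in> A"
      using \<delta>\<Psi> \<delta>(2) by blast
    show "B = {}"
    proof (rule ccontr)
      assume "B \<noteq> {}"
      then obtain \<epsilon> where \<epsilon>: "\<epsilon> \<in> B"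
        by auto
      then have "\<epsilon> \<in> span {\<alpha>, \<delta>}" "\<epsilon> \<in> \<Phi>"
        using AB(1) by auto
      moreover have "orthogonal \<epsilon> \<alpha>" "orthogonal \<epsilon> \<delta>"
        using AB(3) \<open>\<alpha> \<in> A\<close> \<open>\<delta> \<in> A\<close> \<epsilon> by (auto simp: orthogonal_def inner_commute)
      ultimately have "orthogonal \<epsilon> \<epsilon>"
        by (intro orthogonal_to_span[of \<epsilon> "{\<alpha>, \<delta>}"]) auto
      then show False
        using \<open>\<epsilon> \<in> \<Phi>\<close> \<Phi>0 by (auto simp: orthogonal_self)
    qed
  qed
  ultimately show ?thesis
    by (simp add: good_sub_def)
qed

text \<open>The codimension of \<open>V\<close> in \<open>W\<close> bounds that of \<open>V\<close> in the span of the roots not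
  orthogonal to \<open>\<alpha>\<close>, i.e.\ in the component of \<open>\<alpha>\<close>, which is at least \<open>k\<close>.\<close>
lemma exists_nonorthogonal_root_outside:
  fixes \<Phi> V W :: "'a::euclidean_space set"
  assumes \<Phi>: "root_system \<Phi>" and small: "k_small k \<Phi> V" and \<alpha>: "\<alpha> \<in> \<Phi>"
    and VW: "subspace V" "subspace W" "V \<subseteq> W" and dim: "dim W < dim V + k"
  shows "\<exists>\<delta>\<in>\<Phi>. \<alpha> \<bullet> \<delta> \<noteq> 0 \<and> \<delta> \<notin> W"
proof (rule ccontr)
  assume "\<not> ?thesis"
  then have "{\<delta>\<in>\<Phi>. \<delta> \<bullet> \<alpha> \<noteq> 0} \<subseteq> W"
    by (auto simp: inner_commute)
  from dim_Int_codim_le[OF VW this] k_small_nonorthogonal_roots[OF \<Phi> small \<alpha>] dim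
  show False
    by linarith
qed

lemma exists_good_sub_escaping:
  fixes \<Phi> V W :: "'a::euclidean_space set"
  assumes \<Phi>: "root_system \<Phi>" and small: "k_small k \<Phi> V" and \<alpha>: "\<alpha> \<in> \<Phi>" "\<alpha> \<in> W"
    and VW: "subspace V" "subspace W" "V \<subseteq> W" and dim: "dim W < dim V + k"
  shows "\<exists>\<delta>\<in>\<Phi>. \<delta> \<notin> W \<and> good_sub \<Phi> (\<Phi> \<inter> span {\<alpha>, \<delta>})"
proof -
  obtain \<delta> where \<delta>: "\<delta> \<in> \<Phi>" "\<alpha> \<bullet> \<delta> \<noteq> 0" "\<delta> \<notin> W"
    using exists_nonorthogonal_root_outside[OF \<Phi> small \<alpha>(1) VW dim] by blast
  have "span {\<alpha>} \<subseteq> W"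
    using \<alpha>(2) VW(2) by (simp add: span_minimal)
  then have "\<delta> \<notin> span {\<alpha>}"
    using \<delta>(3) by blast
  then show ?thesis
    using good_sub_Int_span_pair[OF root_system_nonzero[OF \<Phi>] \<alpha>(1) \<delta>(1,2)] \<delta> by blast
qed

lemma good_sub_span_Int_eq_line:
  fixes \<Phi> V :: "'a::euclidean_space set"
  assumes \<Phi>: "root_system \<Phi>" and V: "subspace V" and small: "k_small k \<Phi> V" "1 \<le> k"
    and \<alpha>: "\<alpha> \<in> \<Phi>" "\<alpha> \<in> V"
  shows "\<exists>\<Psi>. good_sub \<Phi> \<Psi> \<and> \<alpha> \<in> \<Psi> \<and> span \<Psi> \<inter> V = span {\<alpha>}"
proof -
  obtain \<delta> where \<delta>: "\<delta> \<in> \<Phi>" "\<delta> \<notin> V" and good: "good_sub \<Phi> (\<Phi> \<inter> span {\<alpha>, \<delta>})"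
    using exists_good_sub_escaping[OF \<Phi> small(1) \<alpha> V V order_refl] small(2) by auto
  have "span {\<alpha>} \<subseteq> V"
    using \<alpha>(2) V by (simp add: span_minimal)
  then have "span (insert \<delta> {\<alpha>}) \<inter> V = span {\<alpha>}"
    using span_insert_Int_subspace[OF V _ \<delta>(2)] by blast
  moreover have "span (\<Phi> \<inter> span {\<alpha>, \<delta>}) = span {\<alpha>, \<delta>}"
    using span_Un_Int_span[of "{\<alpha>, \<delta>}" \<Phi> "{}"] \<alpha> \<delta> by simp
  ultimately show ?thesis
    using good \<alpha>(1) by (intro exI[of _ "\<Phi> \<inter> span {\<alpha>, \<delta>}"]) (auto simp: insert_commute span_base)
qed

lemma good_sub_span_Int_eq_line_avoiding:
  fixes \<Phi> V :: "'a::euclidean_space set"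
  assumes \<Phi>: "root_system \<Phi>" and V: "subspace V" and small: "k_small k \<Phi> V" "1 \<le> k"
    and \<alpha>: "\<alpha> \<in> \<Phi>" "\<alpha> \<in> V" and \<beta>: "\<beta> \<in> V" and ind: "\<alpha> \<noteq> \<beta>" "independent {\<alpha>, \<beta>}"
  shows "\<exists>\<Psi>. good_sub \<Phi> \<Psi> \<and> \<alpha> \<in> \<Psi> \<and> \<beta> \<notin> \<Psi> \<and> span \<Psi> \<inter> V = span {\<alpha>}"
proof -
  obtain \<Psi> where \<Psi>: "good_sub \<Phi> \<Psi>" "\<alpha> \<in> \<Psi>" "span \<Psi> \<inter> V = span {\<alpha>}"
    using good_sub_span_Int_eq_line[OF \<Phi> V small \<alpha>] by blast
  have "\<beta> \<notin> span {\<alpha>}"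
    using independent_pair_not_in_span[OF ind(2,1)] .
  then show ?thesis
    using \<Psi> \<beta> by (blast intro: span_base)
qed

lemma good_sub_insert_root_Int_dim_1:
  fixes \<Phi> V :: "'a::euclidean_space set"
  assumes \<Phi>: "root_system \<Phi>" and V: "subspace V" and small: "k_small 2 \<Phi> V"
    and \<alpha>: "\<alpha> \<in> \<Phi>" and \<beta>: "\<beta> \<in> \<Phi>" and ind: "\<alpha> \<noteq> \<beta>" "independent {\<alpha>, \<beta>}"
    and dim: "dim (span {\<alpha>, \<beta>} \<inter> V) = 1"
  shows "\<exists>\<Psi>. good_sub \<Phi> \<Psi> \<and> \<alpha> \<in> \<Psi> \<and> \<beta> \<notin> \<Psi> \<and> dim (span (insert \<beta> \<Psi>) \<inter> V) = 1"
proof -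
  define W where "W = span (V \<union> {\<alpha>, \<beta>})"
  have W: "subspace W" "V \<subseteq> W" "span {\<alpha>, \<beta>} \<subseteq> W"
    unfolding W_def using subset_span_Un[where V=V and S="{\<alpha>, \<beta>}"] by auto
  have "dim {\<alpha>, \<beta>} = 2"
    using dim_span_eq_card_independent[OF ind(2)] ind(1) by simp
  then have "dim W < dim V + 2"
    using dim_span_Un_subspace[OF V, of "{\<alpha>, \<beta>}"] dim by (simp add: W_def Int_commute)
  then obtain \<delta> where \<delta>: "\<delta> \<in> \<Phi>" "\<delta> \<notin> W" and good: "good_sub \<Phi> (\<Phi> \<inter> span {\<alpha>, \<delta>})"
    using exists_good_sub_escaping[OF \<Phi> small \<alpha> _ V W(1,2)] W(3) by (auto intro: span_base)
  have "span (insert \<delta> {\<alpha>}) \<inter> W = span {\<alpha>}"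
    using span_insert_Int_subspace[OF W(1) _ \<delta>(2)] W(3) span_mono[of "{\<alpha>}" "{\<alpha>, \<beta>}"] by auto
  moreover have "\<beta> \<notin> span {\<alpha>}"
    using independent_pair_not_in_span[OF ind(2,1)] .
  moreover have "\<beta> \<in> W"
    using W(3) by (auto intro: span_base)
  ultimately have "\<beta> \<notin> \<Phi> \<inter> span {\<alpha>, \<delta>}"
    by (auto simp: insert_commute)
  moreover have "span (insert \<beta> (\<Phi> \<inter> span {\<alpha>, \<delta>})) = span (insert \<delta> {\<alpha>, \<beta>})"
    using span_Un_Int_span[of "{\<alpha>, \<delta>}" \<Phi> "{\<beta>}"] \<alpha> \<delta> by (simp add: insert_commute)
  moreover have "span (insert \<delta> {\<alpha>, \<beta>}) \<inter> V = span {\<alpha>, \<beta>} \<inter> V"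
    using span_insert_Int_eq[OF W \<delta>(2)] .
  ultimately show ?thesis
    using good \<alpha> dim by (intro exI[of _ "\<Phi> \<inter> span {\<alpha>, \<delta>}"]) (auto intro: span_base)
qed

lemma dim_span_triple_Un_lt:
  fixes V :: "'a::euclidean_space set"
  assumes V: "subspace V" and dim: "dim (span {\<alpha>, \<beta>, \<gamma>} \<inter> V) = 2"
  shows "dim (span (V \<union> {\<alpha>, \<beta>, \<gamma>})) < dim V + 2"
proof -
  have "card {\<alpha>, \<beta>, \<gamma>} \<le> 3"
    by (auto simp: card_insert_if)
  then have "dim {\<alpha>, \<beta>, \<gamma>} \<le> 3"
    using dim_le_card'[of "{\<alpha>, \<beta>, \<gamma>}"] by simp
  then show ?thesis
    using dim_span_Un_subspace[OF V, of "{\<alpha>, \<beta>, \<gamma>}"] dim by (simp add: Int_commute)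
qed

lemma good_sub_insert_two_roots_Int_dim_1:
  fixes \<Phi> V :: "'a::euclidean_space set"
  assumes \<Phi>: "root_system \<Phi>" and V: "subspace V" and small: "k_small 2 \<Phi> V"
    and \<alpha>: "\<alpha> \<in> \<Phi>" "\<alpha> \<in> V" and \<beta>: "\<beta> \<in> \<Phi>" "\<beta> \<notin> V" and \<gamma>: "\<gamma> \<in> \<Phi>" "\<gamma> \<notin> V"
    and dim: "dim (span {\<alpha>, \<beta>, \<gamma>} \<inter> V) = 2"
  shows "\<exists>\<Psi>. good_sub \<Phi> \<Psi> \<and> \<alpha> \<in> \<Psi> \<and> \<beta> \<notin> \<Psi> \<and> \<gamma> \<notin> \<Psi> \<and>
            dim (span (insert \<beta> \<Psi>) \<inter> V) = 1 \<and> dim (span (insert \<gamma> \<Psi>) \<inter> V) = 1"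
proof -
  define W where "W = span (V \<union> {\<alpha>, \<beta>, \<gamma>})"
  have W: "subspace W" "V \<subseteq> W" and \<alpha>\<beta>\<gamma>W: "span {\<alpha>, \<beta>, \<gamma>} \<subseteq> W"
    unfolding W_def using subset_span_Un[where V=V and S="{\<alpha>, \<beta>, \<gamma>}"] by auto
  obtain \<delta> where \<delta>: "\<delta> \<in> \<Phi>" "\<delta> \<notin> W" and good: "good_sub \<Phi> (\<Phi> \<inter> span {\<alpha>, \<delta>})"
    using exists_good_sub_escaping[OF \<Phi> small \<alpha>(1) _ V W] \<alpha>\<beta>\<gamma>W
      dim_span_triple_Un_lt[OF V dim] by (auto simp: W_def intro: span_base)
  have \<alpha>V: "span {\<alpha>} \<subseteq> V"
    using \<alpha>(2) V by (simp add: span_minimal)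
  have \<alpha>\<delta>W: "span (insert \<delta> {\<alpha>}) \<inter> W = span {\<alpha>}"
    using span_insert_Int_subspace[OF W(1) _ \<delta>(2)] \<alpha>V W(2) by auto
  have \<alpha>0: "\<alpha> \<noteq> 0"
    using \<alpha>(1) root_system_nonzero[OF \<Phi>] by auto
  have escape: "\<rho> \<notin> \<Phi> \<inter> span {\<alpha>, \<delta>} \<and> dim (span (insert \<rho> (\<Phi> \<inter> span {\<alpha>, \<delta>})) \<inter> V) = 1"
    if \<rho>: "\<rho> \<in> \<Phi>" "\<rho> \<notin> V" "\<rho> \<in> span {\<alpha>, \<beta>, \<gamma>}" for \<rho>
  proof
    show "\<rho> \<notin> \<Phi> \<inter> span {\<alpha>, \<delta>}"
      using \<alpha>\<delta>W \<alpha>V \<rho> \<alpha>\<beta>\<gamma>W by (auto simp: insert_commute)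
    have "span {\<alpha>, \<rho>} \<subseteq> W"
      using \<alpha>\<beta>\<gamma>W \<rho>(3) W \<alpha>(2) by (intro span_minimal) auto
    then have "span (insert \<rho> (\<Phi> \<inter> span {\<alpha>, \<delta>})) \<inter> V = span (insert \<rho> {\<alpha>}) \<inter> V"
      using span_Un_Int_span[of "{\<alpha>, \<delta>}" \<Phi> "{\<rho>}"] \<alpha> \<delta>(1) span_insert_Int_eq[OF W _ \<delta>(2), of "{\<alpha>, \<rho>}"]
      by (simp add: insert_commute)
    also have "\<dots> = span {\<alpha>}"
      using span_insert_Int_subspace[OF V \<alpha>V \<rho>(2)] \<alpha>V by auto
    finally show "dim (span (insert \<rho> (\<Phi> \<inter> span {\<alpha>, \<delta>})) \<inter> V) = 1"
      using \<alpha>0 by simp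
  qed
  show ?thesis
    using escape[of \<beta>] escape[of \<gamma>] \<beta> \<gamma> good \<alpha>(1)
    by (intro exI[of _ "\<Phi> \<inter> span {\<alpha>, \<delta>}"]) (auto intro: span_base)
qed

lemma good_sub_rank_4_Int_dim_2:
  fixes \<Phi> V :: "'a::euclidean_space set"
  assumes \<Phi>: "root_system \<Phi>" and V: "subspace V" and small: "k_small 2 \<Phi> V"
    and \<alpha>: "\<alpha> \<in> \<Phi>" "\<alpha> \<in> V" and \<beta>: "\<beta> \<in> \<Phi>" "\<beta> \<notin> V" and \<gamma>: "\<gamma> \<in> \<Phi>" "\<gamma> \<notin> V"
    and ind: "\<beta> \<noteq> \<gamma>" "independent {\<alpha>, \<beta>, \<gamma>}" and dim: "dim (span {\<alpha>, \<beta>, \<gamma>} \<inter> V) = 2"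
  shows "\<exists>\<Psi>. good_sub \<Phi> \<Psi> \<and> \<gamma> \<in> \<Psi> \<and>
            dim (span ({\<alpha>, \<beta>} \<union> \<Psi>)) = 4 \<and> dim (span ({\<alpha>, \<beta>} \<union> \<Psi>) \<inter> V) = 2"
proof -
  define W where "W = span (V \<union> {\<alpha>, \<beta>, \<gamma>})"
  have W: "subspace W" "V \<subseteq> W" and \<alpha>\<beta>\<gamma>W: "span {\<alpha>, \<beta>, \<gamma>} \<subseteq> W"
    unfolding W_def using subset_span_Un[where V=V and S="{\<alpha>, \<beta>, \<gamma>}"] by auto
  obtain \<delta> where \<delta>: "\<delta> \<in> \<Phi>" "\<delta> \<notin> W" and good: "good_sub \<Phi> (\<Phi> \<inter> span {\<gamma>, \<delta>})"
    using exists_good_sub_escaping[OF \<Phi> small \<gamma>(1) _ V W] \<alpha>\<beta>\<gamma>W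
      dim_span_triple_Un_lt[OF V dim] by (auto simp: W_def intro: span_base)
  have span_eq: "span ({\<alpha>, \<beta>} \<union> (\<Phi> \<inter> span {\<gamma>, \<delta>})) = span (insert \<delta> {\<alpha>, \<beta>, \<gamma>})"
    using span_Un_Int_span[of "{\<gamma>, \<delta>}" \<Phi> "{\<alpha>, \<beta>}"] \<gamma>(1) \<delta>(1) by (simp add: insert_commute)
  have "card {\<alpha>, \<beta>, \<gamma>} = 3"
    using \<alpha>(2) \<beta>(2) \<gamma>(2) ind(1) by (auto simp: card_insert_if)
  then have "dim (insert \<delta> {\<alpha>, \<beta>, \<gamma>}) = 4"
    using dim_span_eq_card_independent[OF ind(2)] \<alpha>\<beta>\<gamma>W \<delta>(2) by (auto simp: dim_insert)
  moreover have "span (insert \<delta> {\<alpha>, \<beta>, \<gamma>}) \<inter> V = span {\<alpha>, \<beta>, \<gamma>} \<inter> V"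
    using span_insert_Int_eq[OF W \<alpha>\<beta>\<gamma>W \<delta>(2)] .
  ultimately show ?thesis
    using good \<gamma>(1) dim span_eq
    by (intro exI[of _ "\<Phi> \<inter> span {\<gamma>, \<delta>}"]) (auto intro: span_base)
qed

theorem mainTheorem2:
  fixes \<Phi> V :: "'a::euclidean_space set"
  assumes "root_system \<Phi>" and "subspace V" and "V \<subseteq> span \<Phi>"
  shows
   "(k_small 1 \<Phi> V \<longrightarrow> (\<forall>\<alpha>\<in>\<Phi> \<inter> V.
       \<exists>\<Psi>. good_sub \<Phi> \<Psi> \<and> \<alpha> \<in> \<Psi> \<and> span \<Psi> \<inter> V = span {\<alpha>}))
  \<and> (k_small 2 \<Phi> V \<longrightarrow> (\<forall>\<alpha>\<in>\<Phi>. \<forall>\<beta>\<in>\<Phi>.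
       \<alpha> \<noteq> \<beta> \<and> independent {\<alpha>, \<beta>} \<and> dim (span {\<alpha>, \<beta>} \<inter> V) = 1 \<longrightarrow>
       (\<exists>\<Psi>. good_sub \<Phi> \<Psi> \<and> \<alpha> \<in> \<Psi> \<and> \<beta> \<notin> \<Psi> \<and> dim (span (insert \<beta> \<Psi>) \<inter> V) = 1)))
  \<and> (k_small 2 \<Phi> V \<longrightarrow> (\<forall>\<alpha>\<in>\<Phi> \<inter> V. \<forall>\<beta>\<in>\<Phi> \<inter> V.
       \<alpha> \<noteq> \<beta> \<and> independent {\<alpha>, \<beta>} \<longrightarrow>
       (\<exists>\<Psi>. good_sub \<Phi> \<Psi> \<and> \<alpha> \<in> \<Psi> \<and> \<beta> \<notin> \<Psi> \<and> span \<Psi> \<inter> V = span {\<alpha>})))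
  \<and> (k_small 2 \<Phi> V \<longrightarrow> (\<forall>\<alpha>\<in>\<Phi> \<inter> V. \<forall>\<beta>\<in>\<Phi> - V. \<forall>\<gamma>\<in>\<Phi> - V.
       \<beta> \<noteq> \<gamma> \<and> independent {\<beta>, \<gamma>} \<and> dim (span {\<alpha>, \<beta>, \<gamma>} \<inter> V) = 2 \<longrightarrow>
       (\<exists>\<Psi>. good_sub \<Phi> \<Psi> \<and> \<alpha> \<in> \<Psi> \<and> \<beta> \<notin> \<Psi> \<and> \<gamma> \<notin> \<Psi> \<and>
            dim (span (insert \<beta> \<Psi>) \<inter> V) = 1 \<and> dim (span (insert \<gamma> \<Psi>) \<inter> V) = 1)))
  \<and> (k_small 2 \<Phi> V \<longrightarrow> (\<forall>\<alpha>\<in>\<Phi> \<inter> V. \<forall>\<beta>\<in>\<Phi> - V. \<forall>\<gamma>\<in>\<Phi> - V.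
       \<beta> \<noteq> \<gamma> \<and> independent {\<alpha>, \<beta>, \<gamma>} \<and> dim (span {\<alpha>, \<beta>, \<gamma>} \<inter> V) = 2 \<longrightarrow>
       (\<exists>\<Psi>. good_sub \<Phi> \<Psi> \<and> \<gamma> \<in> \<Psi> \<and>
            dim (span ({\<alpha>, \<beta>} \<union> \<Psi>)) = 4 \<and> dim (span ({\<alpha>, \<beta>} \<union> \<Psi>) \<inter> V) = 2)))"
  using good_sub_span_Int_eq_line[OF assms(1,2)]
    good_sub_insert_root_Int_dim_1[OF assms(1,2)]
    good_sub_span_Int_eq_line_avoiding[OF assms(1,2)]
    good_sub_insert_two_roots_Int_dim_1[OF assms(1,2)]
    good_sub_rank_4_Int_dim_2[OF assms(1,2)]
  by (intro conjI impI ballI; simp; blast)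

end
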